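(* Let $q$ be an odd prime power, $f$ a planar function on $\mathbb F_{q^2}$, and $\kappa:\mathbb F_{q^2}\to\mathbb F_{q^2}$, $x\mapsto\bar x$, an additive map such that (a) $\kappa(\kappa(x))=x$ for all $x$; (b) $\overline{f(x)}=f(\bar x)$ for all $x$; (c) $\#\{y\in\mathbb F_{q^2}:y+\bar y=f(x+\bar x)\}=q$ for each $x\in\mathbb F_{q^2}$. Let $\rho$ map the points of $\Pi(f)$ to lines by $(x,y)\mapsto L_{\bar x,\bar y}$, $(a)\mapsto N_{\bar a}$ for $a\in\mathbb F_{q^2}$, $(\infty)\mapsto L_\infty$. Then $\rho$ is a bijection from points to lines, and together with the map sending each line $\rho(P)$ to $P$ it is a unitary polarity of $\Pi(f)$, whose set of absolute points is the unital \[\mathcal U:=\{(x,y)\in\mathbb F_{q^2}^2:y+\bar y=f(x+\bar x)\}\cup\{(\infty)\}.\]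
   Context: A function $f:\mathbb F_{q^2}\to\mathbb F_{q^2}$ is planar if for every $a\neq0$ the map $x\mapsto f(x+a)-f(x)$ is a bijection. For planar $f$, $\Pi(f)$ is the projective plane (of order $q^2$) with points $(x,y)\in\mathbb F_{q^2}^2$ and $(a)$ for $a\in\mathbb F_{q^2}\cup\{\infty\}$, lines $L_{a,b}=\{(x,f(x+a)-b):x\in\mathbb F_{q^2}\}\cup\{(a)\}$, $N_a=\{(a,y):y\in\mathbb F_{q^2}\}\cup\{(\infty)\}$ ($a,b\in\mathbb F_{q^2}$), $L_\infty=\{(a):a\in\mathbb F_{q^2}\cup\{\infty\}\}$. A polarity is a bijection of points onto lines and lines onto points, of order two, preserving incidence (P on $\ell$ iff $\rho(\ell)$ on $\rho(P)$). A point $P$ is absolute if $P\in\rho(P)$; a polarity of a plane of order $q^2$ is unitary if it has exactly $q^3+1$ absolute points. A unital is a set of $q^3+1$ points meeting every line in $1$ or $q+1$ points. *)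

theory Defs
  imports Main "HOL-Computational_Algebra.Primes"
begin

datatype 'a point = Aff 'a 'a | InfPt 'a | InfInf
datatype 'a line = L 'a 'a | N 'a | Linf

definition planar :: "('a::field \<Rightarrow> 'a) \<Rightarrow> bool" where
  "planar f \<longleftrightarrow> (\<forall>a. a \<noteq> 0 \<longrightarrow> bij (\<lambda>x. f (x + a) - f x))"

fun inc :: "('a::field \<Rightarrow> 'a) \<Rightarrow> 'a point \<Rightarrow> 'a line \<Rightarrow> bool" where
  "inc f (Aff x y) (L a b) \<longleftrightarrow> y = f (x + a) - b"
| "inc f (InfPt c) (L a b) \<longleftrightarrow> c = a"
| "inc f InfInf (L a b) \<longleftrightarrow> False"
| "inc f (Aff x y) (N a) \<longleftrightarrow> x = a"
| "inc f (InfPt c) (N a) \<longleftrightarrow> False"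
| "inc f InfInf (N a) \<longleftrightarrow> True"
| "inc f (Aff x y) Linf \<longleftrightarrow> False"
| "inc f (InfPt c) Linf \<longleftrightarrow> True"
| "inc f InfInf Linf \<longleftrightarrow> True"

fun rho :: "('a \<Rightarrow> 'a) \<Rightarrow> 'a point \<Rightarrow> 'a line" where
  "rho k (Aff x y) = L (k x) (k y)"
| "rho k (InfPt a) = N (k a)"
| "rho k InfInf = Linf"

definition polarity :: "('a::field \<Rightarrow> 'a) \<Rightarrow> ('a point \<Rightarrow> 'a line) \<Rightarrow> ('a line \<Rightarrow> 'a point) \<Rightarrow> bool" where
  "polarity f \<sigma> \<tau> \<longleftrightarrow> bij \<sigma> \<and> bij \<tau> \<and> (\<forall>P. \<tau> (\<sigma> P) = P) \<and> (\<forall>l. \<sigma> (\<tau> l) = l)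
     \<and> (\<forall>P l. inc f P l \<longleftrightarrow> inc f (\<tau> l) (\<sigma> P))"

definition absolute_points :: "('a::field \<Rightarrow> 'a) \<Rightarrow> ('a point \<Rightarrow> 'a line) \<Rightarrow> 'a point set" where
  "absolute_points f \<sigma> = {P. inc f P (\<sigma> P)}"

definition unitary_polarity :: "nat \<Rightarrow> ('a::field \<Rightarrow> 'a) \<Rightarrow> ('a point \<Rightarrow> 'a line) \<Rightarrow> ('a line \<Rightarrow> 'a point) \<Rightarrow> bool" where
  "unitary_polarity q f \<sigma> \<tau> \<longleftrightarrow> polarity f \<sigma> \<tau> \<and> card (absolute_points f \<sigma>) = q ^ 3 + 1"

definition unital :: "nat \<Rightarrow> ('a::field \<Rightarrow> 'a) \<Rightarrow> 'a point set \<Rightarrow> bool" where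
  "unital q f U \<longleftrightarrow> finite U \<and> card U = q ^ 3 + 1 \<and>
     (\<forall>l. card {P \<in> U. inc f P l} = 1 \<or> card {P \<in> U. inc f P l} = q + 1)"

definition prime_power :: "nat \<Rightarrow> bool" where
  "prime_power q \<longleftrightarrow> (\<exists>p k. prime p \<and> k > 0 \<and> q = p ^ k)"

end

theory Submission
  imports Defs
begin

text \<open>Since \<open>\<kappa>\<close> is additive, involutive and commutes with \<open>f\<close>, incidence of \<open>(x, y)\<close>
with \<open>\<rho>(x', y')\<close> is symmetric in the two points, so \<open>\<rho>\<close> is a polarity; its absolute
points are visibly \<open>\<U>\<close>. For the unital property count the \<open>q\<^sup>3\<close> affine points of \<open>\<U>\<close>
on the \<open>q\<^sup>4\<close> lines \<open>L a b\<close>. Planarity says that two points with distinct abscissae lie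
on exactly one such line, so the numbers \<open>i(a,b)\<close> of points of \<open>\<U>\<close> on \<open>L a b\<close> have sum
\<open>q\<^sup>5\<close> and sum of squares \<open>q\<^sup>6 + q\<^sup>5 - q\<^sup>4\<close>, i.e. \<open>\<Sum>(i - q - 1)\<^sup>2 = q\<^sup>5\<close>. Planarity also shows
that the \<open>q\<^sup>3\<close> absolute lines meet \<open>\<U>\<close> only in their pole; they alone contribute \<open>q\<^sup>5\<close> to
that sum, so every other line meets \<open>\<U>\<close> in exactly \<open>q + 1\<close> points.\<close>

lemma additive_diff:
  fixes k :: "'a::ab_group_add \<Rightarrow> 'b::ab_group_add"
  assumes "\<And>x y. k (x + y) = k x + k y"
  shows "k (x - y) = k x - k y"
  using assms[of "x - y" y] by (simp add: eq_diff_eq)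

lemma planar_bij_line_values:
  fixes f :: "'a::{field,finite} \<Rightarrow> 'a"
  assumes "planar f" and "x \<noteq> x'"
  shows "bij (\<lambda>(a, b). (f (x + a) - b, f (x' + a) - b))"
proof -
  let ?h = "\<lambda>z. f (z + (x' - x)) - f z"
  have h_inj: "inj ?h"
    using assms by (simp add: planar_def bij_is_inj)
  have h_eq: "?h (x + a) = (f (x' + a) - b) - (f (x + a) - b)" for a b
    by (simp add: add.commute add.left_commute)
  have "inj (\<lambda>(a, b). (f (x + a) - b, f (x' + a) - b))"
  proof (rule injI, clarify)
    fix a b a' b'
    assume eq: "f (x + a) - b = f (x + a') - b'" "f (x' + a) - b = f (x' + a') - b'"
    have "?h (x + a) = ?h (x + a')"
      unfolding h_eq[of a b] h_eq[of a' b'] eq by (rule refl)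
    then have "x + a = x + a'"
      by (rule injD[OF h_inj])
    then show "a = a' \<and> b = b'"
      using eq(1) by simp
  qed
  then show ?thesis
    by (simp add: bij_def finite_UNIV_inj_surj)
qed

lemma sum_UNIV_prod:
  "(\<Sum>p\<in>(UNIV :: ('a::finite \<times> 'b::finite) set). g p) = (\<Sum>a\<in>UNIV. \<Sum>b\<in>UNIV. g (a, b))"
  by (simp add: sum.cartesian_product flip: UNIV_Times_UNIV)

lemma card_squared_eq_sum_of_bool:
  fixes T :: "'a::finite set"
  shows "(of_nat (card T) :: 'b::comm_semiring_1)\<^sup>2 = (\<Sum>x\<in>UNIV. \<Sum>x'\<in>UNIV. of_bool (x \<in> T \<and> x' \<in> T))"
proof -
  have "of_nat (card T) = (\<Sum>x\<in>UNIV. of_bool (x \<in> T) :: 'b)"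
    by simp
  then show ?thesis
    by (simp only: power2_eq_square sum_product of_bool_conj)
qed

lemma sum_power2_diff_const:
  fixes J :: "'b \<Rightarrow> 'c::comm_ring_1"
  shows "(\<Sum>p\<in>S. (J p - c)\<^sup>2) = (\<Sum>p\<in>S. (J p)\<^sup>2) - 2 * c * (\<Sum>p\<in>S. J p) + of_nat (card S) * c\<^sup>2"
  by (simp add: power2_diff sum.distrib sum_subtractf sum_distrib_left sum_distrib_right mult_ac)

lemma sum_square_deviation_eq_imp_const:
  fixes J :: "'b \<Rightarrow> 'c::linordered_idom"
  assumes "finite S" and "A \<subseteq> S"
    and "(\<Sum>p\<in>S. (J p - c)\<^sup>2) = (\<Sum>p\<in>A. (J p - c)\<^sup>2)"
    and "p \<in> S - A"
  shows "J p = c"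
proof -
  have "(\<Sum>p\<in>S - A. (J p - c)\<^sup>2) = 0"
    using sum.subset_diff[OF assms(2,1), of "\<lambda>p. (J p - c)\<^sup>2"] assms(3) by simp
  then have "(J p - c)\<^sup>2 = 0"
    using assms(1,4) by (simp add: sum_nonneg_eq_0_iff)
  then show ?thesis
    by simp
qed

fun pole :: "('a \<Rightarrow> 'a) \<Rightarrow> 'a line \<Rightarrow> 'a point" where
  "pole k (L a b) = Aff (k a) (k b)"
| "pole k (N a) = InfPt (k a)"
| "pole k Linf = InfInf"

context
  fixes k :: "'a \<Rightarrow> 'a"
  assumes involutive: "\<And>x. k (k x) = x"
begin

lemma pole_rho: "pole k (rho k P) = P"
  by (cases P) (simp_all add: involutive)

lemma rho_pole: "rho k (pole k l) = l"
  by (cases l) (simp_all add: involutive)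

lemma inv_rho: "inv (rho k) = pole k"
  by (rule inv_unique_comp) (simp_all add: fun_eq_iff pole_rho rho_pole)

lemma bij_rho: "bij (rho k)"
  by (rule o_bij[of "pole k"]) (simp_all add: fun_eq_iff pole_rho rho_pole)

lemma bij_pole: "bij (pole k)"
  by (rule o_bij[of "rho k"]) (simp_all add: fun_eq_iff pole_rho rho_pole)

end

lemma absolute_points_rho:
  "absolute_points f (rho k) = {Aff x y | x y. y + k y = f (x + k x)} \<union> {InfInf}"
proof -
  have "inc f P (rho k P) \<longleftrightarrow> P \<in> {Aff x y | x y. y + k y = f (x + k x)} \<union> {InfInf}" for P
    by (cases P) (auto simp: eq_diff_eq)
  then show ?thesis
    unfolding absolute_points_def by blast
qed

lemma inc_rho_swap:
  fixes f k :: "'a::field \<Rightarrow> 'a"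
  assumes additive: "\<And>x y. k (x + y) = k x + k y"
    and involutive: "\<And>x. k (k x) = x"
    and commute: "\<And>x. k (f x) = f (k x)"
  shows "inc f P (rho k R) \<longleftrightarrow> inc f R (rho k P)"
proof (cases P; cases R)
  fix x y x' y'
  assume P: "P = Aff x y" and R: "R = Aff x' y'"
  have "y = f (x + k x') - k y' \<longleftrightarrow> k y = k (f (x + k x') - k y')"
    by (metis involutive)
  also have "\<dots> \<longleftrightarrow> y' = f (x' + k x) - k y"
    by (auto simp: additive_diff[OF additive] additive commute involutive add.commute)
  finally show ?thesis
    using P R by simp
qed (auto simp: involutive)

lemma polarity_rho:
  fixes f k :: "'a::field \<Rightarrow> 'a"
  assumes "\<And>x y. k (x + y) = k x + k y"
    and "\<And>x. k (k x) = x"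
    and "\<And>x. k (f x) = f (k x)"
  shows "polarity f (rho k) (inv (rho k))"
  unfolding polarity_def inv_rho[OF assms(2)]
proof (intro conjI allI)
  show "bij (rho k)" "bij (pole k)"
    using assms(2) by (rule bij_rho, rule bij_pole)
  show "pole k (rho k P) = P" "rho k (pole k l) = l" for P l
    using assms(2) by (simp_all add: pole_rho rho_pole)
  show "inc f P l \<longleftrightarrow> inc f (pole k l) (rho k P)" for P l
    using inc_rho_swap[of k f, OF assms, of P "pole k l"] by (simp add: rho_pole assms(2))
qed

locale planar_fibre_count =
  fixes f :: "'a::{field,finite} \<Rightarrow> 'a" and U :: "'a \<Rightarrow> 'a \<Rightarrow> bool" and m :: nat
  assumes planar: "planar f"
    and card_fibre: "\<And>x. card {y. U x y} = m"
begin

definition line_trace :: "'a \<times> 'a \<Rightarrow> 'a set" where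
  "line_trace l = {x. U x (f (x + fst l) - snd l)}"

lemma card_graph: "card {(x, y). U x y} = card (UNIV :: 'a set) * m"
proof -
  have "card {(x, y). U x y} = (\<Sum>p\<in>UNIV. of_bool (p \<in> {(x, y). U x y}))"
    by simp
  also have "\<dots> = (\<Sum>x\<in>UNIV. \<Sum>y\<in>UNIV. of_bool (U x y))"
    by (simp only: sum_UNIV_prod mem_Collect_eq prod.case)
  also have "\<dots> = card (UNIV :: 'a set) * m"
    by (simp add: card_fibre)
  finally show ?thesis .
qed

lemma card_traces_containing: "card {l. x \<in> line_trace l} = card (UNIV :: 'a set) * m"
proof -
  have fibre: "card {b. U x (f (x + a) - b)} = m" for a
  proof -
    have "bij_betw (\<lambda>b. f (x + a) - b) {b. U x (f (x + a) - b)} {y. U x y}"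
      by (rule bij_betw_byWitness[where f' = "\<lambda>y. f (x + a) - y"]) auto
    then show ?thesis
      using bij_betw_same_card card_fibre by metis
  qed
  have "card {l. x \<in> line_trace l} = (\<Sum>l\<in>UNIV. of_bool (x \<in> line_trace l))"
    by simp
  also have "\<dots> = card (UNIV :: 'a set) * m"
    by (simp add: sum_UNIV_prod line_trace_def fibre)
  finally show ?thesis .
qed

lemma card_traces_containing_two:
  assumes "x \<noteq> x'"
  shows "card {l. x \<in> line_trace l \<and> x' \<in> line_trace l} = m\<^sup>2"
proof -
  let ?g = "\<lambda>(a, b). (f (x + a) - b, f (x' + a) - b)"
  have "card {l. x \<in> line_trace l \<and> x' \<in> line_trace l}
      = (\<Sum>l\<in>UNIV. of_bool (x \<in> line_trace l \<and> x' \<in> line_trace l))"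
    by simp
  also have "\<dots> = (\<Sum>l\<in>UNIV. (\<lambda>(y, y'). of_bool (U x y) * of_bool (U x' y')) (?g l))"
    by (intro sum.cong) (auto simp: line_trace_def)
  also have "\<dots> = (\<Sum>(y, y')\<in>UNIV. of_bool (U x y) * of_bool (U x' y'))"
    using planar_bij_line_values[OF planar assms] by (rule sum.reindex_bij_betw)
  also have "\<dots> = (\<Sum>y\<in>UNIV. of_bool (U x y)) * (\<Sum>y'\<in>UNIV. of_bool (U x' y'))"
    unfolding sum_UNIV_prod sum_product by simp
  also have "\<dots> = m\<^sup>2"
    by (simp add: card_fibre power2_eq_square)
  finally show ?thesis .
qed

lemma sum_card_line_trace: "(\<Sum>l\<in>UNIV. card (line_trace l)) = card (UNIV :: 'a set) ^ 2 * m"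
proof -
  have "(\<Sum>l\<in>UNIV. card (line_trace l)) = (\<Sum>l\<in>UNIV. \<Sum>x\<in>UNIV. of_bool (x \<in> line_trace l))"
    by simp
  also have "\<dots> = (\<Sum>x\<in>UNIV. \<Sum>l\<in>UNIV. of_bool (x \<in> line_trace l))"
    by (rule sum.swap)
  also have "\<dots> = card (UNIV :: 'a set) ^ 2 * m"
    by (simp add: card_traces_containing power2_eq_square)
  finally show ?thesis .
qed

lemma sum_card_line_trace_squared:
  defines "n \<equiv> int (card (UNIV :: 'a set))"
  shows "(\<Sum>l\<in>UNIV. int (card (line_trace l)) ^ 2) = n ^ 2 * int m + n * (n - 1) * int m ^ 2"
proof -
  have pairs: "int (card {l. x \<in> line_trace l \<and> x' \<in> line_trace l})
      = int m ^ 2 + (if x' = x then n * int m - int m ^ 2 else 0)" for x x'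
    by (cases "x' = x") (simp_all add: card_traces_containing card_traces_containing_two n_def)
  have "(\<Sum>l\<in>UNIV. int (card (line_trace l)) ^ 2)
      = (\<Sum>l\<in>UNIV. \<Sum>x\<in>UNIV. \<Sum>x'\<in>UNIV. of_bool (x \<in> line_trace l \<and> x' \<in> line_trace l))"
    by (simp only: card_squared_eq_sum_of_bool)
  also have "\<dots> = (\<Sum>x\<in>UNIV. \<Sum>x'\<in>UNIV. \<Sum>l\<in>UNIV. of_bool (x \<in> line_trace l \<and> x' \<in> line_trace l))"
    by (subst sum.swap, rule sum.cong[OF refl], rule sum.swap)
  also have "\<dots> = n * (int m ^ 2 * n + (n * int m - int m ^ 2))"
    by (simp add: pairs sum.distrib n_def)
  also have "\<dots> = n ^ 2 * int m + n * (n - 1) * int m ^ 2"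
    by (simp add: algebra_simps power2_eq_square)
  finally show ?thesis .
qed

end

locale hermitian_planar = planar_fibre_count f "\<lambda>x y. y + \<kappa> y = f (x + \<kappa> x)" q
  for f :: "'a::{field,finite} \<Rightarrow> 'a" and \<kappa> :: "'a \<Rightarrow> 'a" and q :: nat +
  assumes card_UNIV: "card (UNIV :: 'a set) = q ^ 2"
    and additive: "\<And>x y. \<kappa> (x + y) = \<kappa> x + \<kappa> y"
    and involutive: "\<And>x. \<kappa> (\<kappa> x) = x"
    and commute: "\<And>x. \<kappa> (f x) = f (\<kappa> x)"
begin

lemma tangent_line_trace:
  assumes tangent: "b + \<kappa> b = f (a + \<kappa> a)"
  shows "line_trace (a, b) = {\<kappa> a}"
proof
  have "f (\<kappa> a + a) - b = \<kappa> b"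
    using tangent by (metis add.commute add_diff_cancel_left')
  then show "{\<kappa> a} \<subseteq> line_trace (a, b)"
    using tangent by (simp add: line_trace_def involutive add.commute)
  show "line_trace (a, b) \<subseteq> {\<kappa> a}"
  proof
    fix x
    assume "x \<in> line_trace (a, b)"
    define y where "y = f (x + a) - b"
    have y: "y + \<kappa> y = f (x + \<kappa> x)"
      using \<open>x \<in> line_trace (a, b)\<close> by (simp add: line_trace_def y_def)
    have "x = \<kappa> a"
    proof (rule ccontr)
      assume "x \<noteq> \<kappa> a"
      then have inj: "inj (\<lambda>z. f (z + (\<kappa> a - x)) - f z)"
        using planar by (simp add: planar_def bij_is_inj)
      have "f (x + a + (\<kappa> a - x)) - f (x + a) = \<kappa> b - y"
        using tangent by (simp add: y_def algebra_simps)
      moreover have "f (x + \<kappa> x + (\<kappa> a - x)) - f (x + \<kappa> x) = \<kappa> b - y"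
      proof -
        have "f (\<kappa> a + \<kappa> x) = f (\<kappa> (x + a))"
          by (simp add: additive add.commute)
        also have "\<dots> = \<kappa> y + \<kappa> b"
          by (simp add: y_def commute[symmetric] additive[symmetric])
        finally show ?thesis
          using y by (simp add: algebra_simps)
      qed
      ultimately have "x + a = x + \<kappa> x"
        using injD[OF inj] by metis
      then show False
        using \<open>x \<noteq> \<kappa> a\<close> involutive by auto
    qed
    then show "x \<in> {\<kappa> a}"
      by simp
  qed
qed

lemma card_secant_line_trace:
  assumes "b + \<kappa> b \<noteq> f (a + \<kappa> a)"
  shows "card (line_trace (a, b)) = q + 1"
proof -
  define J where "J l = int (card (line_trace l))" for l
  define c where "c = int q + 1"
  let ?T = "{(a, b). b + \<kappa> b = f (a + \<kappa> a)}"
  have card_lines: "card (UNIV :: ('a \<times> 'a) set) = q ^ 4"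
    by (simp flip: UNIV_Times_UNIV add: card_cartesian_product card_UNIV power_add[symmetric])
  have sum_J: "(\<Sum>l\<in>UNIV. J l) = int q ^ 5"
    unfolding J_def of_nat_sum[symmetric] sum_card_line_trace card_UNIV by (simp add: power_mult[symmetric] flip: power_Suc2)
  have sum_J2: "(\<Sum>l\<in>UNIV. (J l)\<^sup>2) = int q ^ 6 + int q ^ 5 - int q ^ 4"
    using sum_card_line_trace_squared unfolding J_def card_UNIV of_nat_power by algebra
  have "(\<Sum>l\<in>UNIV. (J l - c)\<^sup>2) = int q ^ 5"
    unfolding sum_power2_diff_const sum_J sum_J2 card_lines c_def of_nat_power by algebra
  also have "\<dots> = (\<Sum>l\<in>?T. (J l - c)\<^sup>2)"
  proof -
    have "(\<Sum>l\<in>?T. (J l - c)\<^sup>2) = (\<Sum>l\<in>?T. int q ^ 2)"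
      by (intro sum.cong) (auto simp: J_def c_def tangent_line_trace)
    also have "\<dots> = int (card ?T) * int q ^ 2"
      by simp
    also have "\<dots> = int q ^ 3 * int q ^ 2"
      using card_graph by (simp add: card_UNIV power2_eq_square power3_eq_cube)
    finally show ?thesis
      by (simp flip: power_add)
  qed
  finally have deviation: "(\<Sum>l\<in>UNIV. (J l - c)\<^sup>2) = (\<Sum>l\<in>?T. (J l - c)\<^sup>2)" .
  have "(a, b) \<in> UNIV - ?T"
    using assms by simp
  then have "J (a, b) = c"
    by (rule sum_square_deviation_eq_imp_const[OF finite_UNIV subset_UNIV deviation])
  then show ?thesis
    by (simp add: J_def c_def)
qed

lemma card_absolute_points_on_line:
  "card {P \<in> absolute_points f (rho \<kappa>). inc f P l} \<in> {1, q + 1}"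
proof (cases l)
  case (L a b)
  have "{P \<in> absolute_points f (rho \<kappa>). inc f P l} = (\<lambda>x. Aff x (f (x + a) - b)) ` line_trace (a, b)"
    by (auto simp: L absolute_points_rho line_trace_def)
  then have "card {P \<in> absolute_points f (rho \<kappa>). inc f P l} = card (line_trace (a, b))"
    by (simp add: card_image inj_on_def)
  then show ?thesis
    using tangent_line_trace card_secant_line_trace by (cases "b + \<kappa> b = f (a + \<kappa> a)") auto
next
  case (N a)
  have "{P \<in> absolute_points f (rho \<kappa>). inc f P l} = insert InfInf (Aff a ` {y. y + \<kappa> y = f (a + \<kappa> a)})"
    by (auto simp: N absolute_points_rho)
  moreover have "card (Aff a ` {y. y + \<kappa> y = f (a + \<kappa> a)}) = q"
    using card_fibre[of a] by (simp add: card_image inj_on_def)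
  ultimately show ?thesis
    by (simp add: card_insert_if image_iff)
next
  case Linf
  then have "{P \<in> absolute_points f (rho \<kappa>). inc f P l} = {InfInf}"
    by (auto simp: absolute_points_rho)
  then show ?thesis
    by simp
qed

lemma unital_absolute_points: "unital q f (absolute_points f (rho \<kappa>))"
proof -
  let ?A = "{(x, y). y + \<kappa> y = f (x + \<kappa> x)}"
  have points: "absolute_points f (rho \<kappa>) = insert InfInf ((\<lambda>(x, y). Aff x y) ` ?A)"
    by (auto simp: absolute_points_rho)
  have "card ((\<lambda>(x, y). Aff x y) ` ?A) = q ^ 3"
    using card_graph by (simp add: card_image inj_on_def card_UNIV power2_eq_square power3_eq_cube)
  then have "card (absolute_points f (rho \<kappa>)) = q ^ 3 + 1"
    unfolding points by (subst card_insert_disjoint) auto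
  then show ?thesis
    using card_absolute_points_on_line unfolding unital_def points by auto
qed

end

theorem lemma4p1:
  fixes q :: nat and f :: "'a::{field,finite} \<Rightarrow> 'a" and \<kappa> :: "'a \<Rightarrow> 'a"
  assumes "prime_power q" and "odd q"
    and "card (UNIV :: 'a set) = q ^ 2"
    and "planar f"
    and "\<And>x y. \<kappa> (x + y) = \<kappa> x + \<kappa> y"
    and "\<And>x. \<kappa> (\<kappa> x) = x"
    and "\<And>x. \<kappa> (f x) = f (\<kappa> x)"
    and "\<And>x. card {y. y + \<kappa> y = f (x + \<kappa> x)} = q"
  shows "bij (rho \<kappa>) \<and> unitary_polarity q f (rho \<kappa>) (inv (rho \<kappa>))
    \<and> absolute_points f (rho \<kappa>) = {Aff x y | x y. y + \<kappa> y = f (x + \<kappa> x)} \<union> {InfInf}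
    \<and> unital q f ({Aff x y | x y. y + \<kappa> y = f (x + \<kappa> x)} \<union> {InfInf})"
proof -
  interpret hermitian_planar f \<kappa> q
    using assms(3-8) by unfold_locales
  have "polarity f (rho \<kappa>) (inv (rho \<kappa>))"
    using assms(5-7) by (rule polarity_rho)
  then show ?thesis
    using bij_rho[OF assms(6)] unital_absolute_points absolute_points_rho[of f \<kappa>]
    unfolding unitary_polarity_def unital_def by simp
qed

end
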